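(* Let $\lambda=\{\mathbf u_0,\dots,\mathbf u_{d-1}\}\subset\mathbb{Z}^n_{\ge0}$ be a finite downward-closed subset, enumerated so that $\mathbf u_0=0$ and each $\{\mathbf u_0,\dots,\mathbf u_k\}$ is downward closed. Define for $1\le m\le d-1$ $$W_T(\mathbf u_m)=\begin{cases}0&\text{if }\mathbf u_m=e_i\text{ for some }i,\\ \#\{(i,j):1\le i\le j\le d-1,\ \mathbf u_i+\mathbf u_j=\mathbf u_m\}-1&\text{otherwise,}\end{cases}$$ $$W_B(\mathbf u_m)=\#\{(i,j,k)\in\{1,\dots,d-1\}^3: i<k,\ \mathbf u_i+\mathbf u_j+\mathbf u_k=\mathbf u_m\}.$$ Then $W_T(\mathbf u_m)\le W_B(\mathbf u_m)$ for all $m=1,\dots,d-1$.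
   Context: A subset $\lambda\subset\mathbb{Z}^n_{\ge0}$ is downward closed if $\mathbf u\in\lambda$ and $0\le\mathbf v\le\mathbf u$ coordinatewise imply $\mathbf v\in\lambda$. $e_i$ denotes the $i$-th unit vector. (In the paper $\lambda$ arises as the largest partition of a nested partition with an enumeration compatible with the nesting.) *)

theory Defs
  imports Main
begin

text \<open>Vectors in Z^n_{>=0} are represented as functions nat => nat vanishing outside {..<n}.\<close>

definition vecs :: "nat \<Rightarrow> (nat \<Rightarrow> nat) set" where
  "vecs n = {v. \<forall>i\<ge>n. v i = 0}"

definition unit_vec :: "nat \<Rightarrow> nat \<Rightarrow> nat" where
  "unit_vec i = (\<lambda>j. if j = i then 1 else 0)"

definition downward_closed :: "nat \<Rightarrow> (nat \<Rightarrow> nat) set \<Rightarrow> bool" where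
  "downward_closed n L \<longleftrightarrow> L \<subseteq> vecs n \<and>
     (\<forall>u\<in>L. \<forall>v. v \<le> u \<longrightarrow> v \<in> L)"

definition vadd :: "(nat \<Rightarrow> nat) \<Rightarrow> (nat \<Rightarrow> nat) \<Rightarrow> nat \<Rightarrow> nat" where
  "vadd a b = (\<lambda>j. a j + b j)"

definition W_T :: "nat \<Rightarrow> (nat \<Rightarrow> nat \<Rightarrow> nat) \<Rightarrow> nat \<Rightarrow> nat \<Rightarrow> int" where
  "W_T n u d m = (if \<exists>i<n. u m = unit_vec i then 0
     else int (card {(i, j). 1 \<le> i \<and> i \<le> j \<and> j \<le> d - 1 \<and> vadd (u i) (u j) = u m}) - 1)"

definition W_B :: "(nat \<Rightarrow> nat \<Rightarrow> nat) \<Rightarrow> nat \<Rightarrow> nat \<Rightarrow> int" where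
  "W_B u d m = int (card {(i, j, k). i \<in> {1..d-1} \<and> j \<in> {1..d-1} \<and> k \<in> {1..d-1}
      \<and> i < k \<and> vadd (vadd (u i) (u j)) (u k) = u m})"

end

theory Submission
  imports Defs "HOL-Library.Function_Algebras"
begin

text \<open>
  Let \<open>v = u\<^sub>m\<close> be no unit vector and pick a unit vector \<open>e \<le> v\<close>; it lies in
  \<open>\<lambda>\<close> by downward closure. At most one pair \<open>u\<^sub>i + u\<^sub>j = v\<close> has a summand
  equal to \<open>e\<close>. Every other pair \<open>a + b = v\<close> has \<open>e \<le> a\<close>, say, because \<open>e\<close> is
  a unit vector, and then \<open>e + (a - e) + b = v\<close> is a triple counted by \<open>W\<^sub>B\<close>: all
  three summands are nonzero and lie in \<open>\<lambda>\<close>. The pair is recovered from the triple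
  as \<open>{b, v - b}\<close>, so the number of pairs exceeds the number of triples by at most one.
\<close>

lemma vadd_eq_plus: "vadd a b = a + b"
  by (simp add: vadd_def plus_fun_def)

lemma unit_vec_le_iff: "unit_vec t \<le> v \<longleftrightarrow> v t \<noteq> 0"
  by (auto simp: unit_vec_def le_fun_def)

lemma unit_vec_le_plusD: "unit_vec t \<le> a + b \<Longrightarrow> unit_vec t \<le> a \<or> unit_vec t \<le> b"
  by (simp add: unit_vec_le_iff)

lemma unit_vec_nonzero: "unit_vec t \<noteq> 0"
  using unit_vec_le_iff[of t "unit_vec t"] by auto

lemma obtain_unit_vec_le:
  assumes "v \<in> vecs n" and "v \<noteq> 0"
  obtains t where "t < n" and "unit_vec t \<le> v"
proof -
  obtain t where "v t \<noteq> 0"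
    using assms(2) by (auto simp: fun_eq_iff)
  moreover have "\<not> n \<le> t"
    using assms(1) calculation by (auto simp: vecs_def)
  ultimately show thesis
    using that[of t] by (simp add: unit_vec_le_iff not_le)
qed

lemma fun_add_diff_cancel: "(e :: nat \<Rightarrow> nat) \<le> a \<Longrightarrow> e + (a - e) = a"
  by (simp add: le_fun_def fun_eq_iff)

lemma min_max_cancel:
  fixes a q q' :: nat
  assumes "min a q = min a q'" and "max a q = max a q'"
  shows "q = q'"
  using assms by (auto simp: min_def max_def split: if_splits)

locale downset_enumeration =
  fixes n d :: nat and u :: "nat \<Rightarrow> nat \<Rightarrow> nat"
  assumes inj_u: "inj_on u {..<d}"
    and u_0: "u 0 = 0"
    and downward_closed_image: "downward_closed n (u ` {..<d})"
begin

definition index :: "(nat \<Rightarrow> nat) \<Rightarrow> nat" where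
  "index = the_inv_into {..<d} u"

lemma index_u: "i < d \<Longrightarrow> index (u i) = i"
  by (simp add: index_def inj_u the_inv_into_f_f)

lemma u_index: "w \<in> u ` {..<d} \<Longrightarrow> u (index w) = w"
  by (simp add: index_def inj_u f_the_inv_into_f)

lemma index_less: "w \<in> u ` {..<d} \<Longrightarrow> index w < d"
  using the_inv_into_into[OF inj_u, of w "{..<d}"] by (simp add: index_def)

lemma u_eq_0_iff: "i < d \<Longrightarrow> u i = 0 \<longleftrightarrow> i = 0"
  using inj_onD[OF inj_u, of i 0] by (auto simp: u_0)

lemma index_pos: "w \<in> u ` {..<d} \<Longrightarrow> w \<noteq> 0 \<Longrightarrow> 0 < index w"
  using u_index u_0 by (metis gr0I)

lemma le_u_in_image: "m < d \<Longrightarrow> w \<le> u m \<Longrightarrow> w \<in> u ` {..<d}"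
  using downward_closed_image by (auto simp: downward_closed_def)

lemma u_in_vecs: "m < d \<Longrightarrow> u m \<in> vecs n"
  using downward_closed_image by (auto simp: downward_closed_def)

definition sum_pairs :: "nat \<Rightarrow> (nat \<times> nat) set" where
  "sum_pairs m = {(i, j). 0 < i \<and> i \<le> j \<and> j < d \<and> u i + u j = u m}"

definition sum_triples :: "nat \<Rightarrow> (nat \<times> nat \<times> nat) set" where
  "sum_triples m = {(i, j, k). i \<in> {1..<d} \<and> j \<in> {1..<d} \<and> k \<in> {1..<d}
     \<and> i < k \<and> u i + u j + u k = u m}"

lemma W_T_eq:
  "\<not> (\<exists>i<n. u m = unit_vec i) \<Longrightarrow> W_T n u d m = int (card (sum_pairs m)) - 1"
  unfolding W_T_def sum_pairs_def vadd_eq_plus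
  by (auto intro!: arg_cong[where f = card])

lemma W_B_eq: "W_B u d m = int (card (sum_triples m))"
  unfolding W_B_def sum_triples_def vadd_eq_plus
  by (auto intro!: arg_cong[where f = card])

lemma finite_sum_triples: "finite (sum_triples m)"
  by (rule finite_subset[of _ "{..<d} \<times> {..<d} \<times> {..<d}"]) (auto simp: sum_triples_def)

lemma card_sum_pairs_through_le_1:
  "card {p \<in> sum_pairs m. u (fst p) = e \<or> u (snd p) = e} \<le> 1"
proof -
  have "{p \<in> sum_pairs m. u (fst p) = e \<or> u (snd p) = e}
      \<subseteq> {(min (index e) (index (u m - e)), max (index e) (index (u m - e)))}" (is "_ \<subseteq> {?pair}")
  proof
    fix p
    assume p: "p \<in> {p \<in> sum_pairs m. u (fst p) = e \<or> u (snd p) = e}"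
    obtain i j where [simp]: "p = (i, j)"
      by fastforce
    from p have e: "u i = e \<or> u j = e" and "i \<le> j" "i < d" "j < d" and sum: "u i + u j = u m"
      by (auto simp: sum_pairs_def)
    have "u m - u i = u j" "u m - u j = u i"
      by (simp_all flip: sum)
    with e consider "e = u i" "u m - e = u j" | "e = u j" "u m - e = u i"
      by auto
    then have "index e = i \<and> index (u m - e) = j \<or> index e = j \<and> index (u m - e) = i"
      by cases (simp_all add: index_u \<open>i < d\<close> \<open>j < d\<close>)
    then show "p \<in> {?pair}"
      using \<open>i \<le> j\<close> by auto
  qed
  then have "card {p \<in> sum_pairs m. u (fst p) = e \<or> u (snd p) = e} \<le> card {?pair}"
    by (intro card_mono) simp_all
  then show ?thesis
    by simp
qed

definition peel_off :: "(nat \<Rightarrow> nat) \<Rightarrow> nat \<times> nat \<Rightarrow> nat \<times> nat \<times> nat" where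
  "peel_off e = (\<lambda>(i, j). let (p, q) = if e \<le> u i then (i, j) else (j, i)
     in (min (index e) q, index (u p - e), max (index e) q))"

lemma obtain_peeled_summand:
  assumes "(i, j) \<in> sum_pairs m" and "unit_vec t \<le> u m"
  obtains p q where "peel_off (unit_vec t) (i, j)
      = (min (index (unit_vec t)) q, index (u p - unit_vec t), max (index (unit_vec t)) q)"
    and "p = i \<and> q = j \<or> p = j \<and> q = i" and "unit_vec t \<le> u p"
proof -
  have "unit_vec t \<le> u i + u j"
    using assms by (simp add: sum_pairs_def)
  then have e_le: "unit_vec t \<le> u i \<or> unit_vec t \<le> u j"
    by (rule unit_vec_le_plusD)
  show thesis
  proof (cases "unit_vec t \<le> u i")
    case True
    then show thesis
      using that[where p = i and q = j] by (simp add: peel_off_def)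
  next
    case False
    then show thesis
      using that[where p = j and q = i] e_le by (simp add: peel_off_def)
  qed
qed

lemma peel_off_in_sum_triples:
  assumes "m < d" and e_le: "unit_vec t \<le> u m"
    and pair: "(i, j) \<in> sum_pairs m" and "u i \<noteq> unit_vec t" and "u j \<noteq> unit_vec t"
  shows "peel_off (unit_vec t) (i, j) \<in> sum_triples m"
proof -
  define e where "e = unit_vec t"
  obtain p q where peel: "peel_off e (i, j) = (min (index e) q, index (u p - e), max (index e) q)"
    and pq: "p = i \<and> q = j \<or> p = j \<and> q = i" and "e \<le> u p"
    using obtain_peeled_summand[OF pair e_le] unfolding e_def .
  have "0 < i" "i \<le> j" "j < d" "u i + u j = u m"
    using pair by (auto simp: sum_pairs_def)
  then have "0 < q" "q < d" "p < d" and sum: "u p + u q = u m" and "u p \<noteq> e" "u q \<noteq> e"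
    using pq assms(4,5) by (auto simp: e_def add.commute)
  have e_in: "e \<in> u ` {..<d}"
    using le_u_in_image \<open>m < d\<close> e_le by (simp add: e_def)
  then have e_index: "0 < index e" "index e < d" "u (index e) = e"
    using index_pos index_less u_index unit_vec_nonzero by (auto simp: e_def)
  have "u p - e \<le> u m"
    by (simp add: le_fun_def trans_le_add1 flip: sum)
  then have c_in: "u p - e \<in> u ` {..<d}"
    using le_u_in_image \<open>m < d\<close> by blast
  have "u p - e \<noteq> 0"
  proof
    assume "u p - e = 0"
    then have "u p = e"
      using fun_add_diff_cancel[OF \<open>e \<le> u p\<close>] by simp
    with \<open>u p \<noteq> e\<close> show False ..
  qed
  then have c_index: "0 < index (u p - e)" "index (u p - e) < d" "u (index (u p - e)) = u p - e"
    using c_in index_pos index_less u_index by auto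
  have sum3: "u (index e) + u (index (u p - e)) + u q = u m"
    using e_index(3) c_index(3) fun_add_diff_cancel[OF \<open>e \<le> u p\<close>] sum by simp
  have "index e \<noteq> q"
    using e_index(3) \<open>u q \<noteq> e\<close> by blast
  then show ?thesis
    unfolding e_def[symmetric] peel sum_triples_def
    using e_index(1,2) c_index(1,2) \<open>0 < q\<close> \<open>q < d\<close> sum3
    by (cases "index e < q") (auto simp: min_def max_def ac_simps)
qed

lemma inj_on_peel_off:
  assumes "unit_vec t \<le> u m"
  shows "inj_on (peel_off (unit_vec t)) (sum_pairs m)"
proof (rule inj_onI, clarify)
  fix i j i' j'
  assume pair: "(i, j) \<in> sum_pairs m" and pair': "(i', j') \<in> sum_pairs m"
    and eq: "peel_off (unit_vec t) (i, j) = peel_off (unit_vec t) (i', j')"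
  obtain p q where peel: "peel_off (unit_vec t) (i, j)
      = (min (index (unit_vec t)) q, index (u p - unit_vec t), max (index (unit_vec t)) q)"
    and pq: "p = i \<and> q = j \<or> p = j \<and> q = i"
    using obtain_peeled_summand[OF pair assms] .
  obtain p' q' where peel': "peel_off (unit_vec t) (i', j')
      = (min (index (unit_vec t)) q', index (u p' - unit_vec t), max (index (unit_vec t)) q')"
    and pq': "p' = i' \<and> q' = j' \<or> p' = j' \<and> q' = i'"
    using obtain_peeled_summand[OF pair' assms] .
  have "q = q'"
    using eq unfolding peel peel' by (auto intro: min_max_cancel)
  have "u p + u q = u m" "u p' + u q' = u m" "p < d" "p' < d"
    using pair pair' pq pq' by (auto simp: sum_pairs_def add.commute)
  then have "u p = u p'"
    using \<open>q = q'\<close> by (metis add_right_cancel)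
  then have "p = p'"
    using inj_onD[OF inj_u] \<open>p < d\<close> \<open>p' < d\<close> by blast
  then show "i = i' \<and> j = j'"
    using \<open>q = q'\<close> pq pq' pair pair' by (auto simp: sum_pairs_def)
qed

lemma card_sum_pairs_le:
  assumes "m < d" and e_le: "unit_vec t \<le> u m"
  shows "card (sum_pairs m) \<le> card (sum_triples m) + 1"
proof -
  define through where "through = {p \<in> sum_pairs m. u (fst p) = unit_vec t \<or> u (snd p) = unit_vec t}"
  have "peel_off (unit_vec t) p \<in> sum_triples m" if "p \<in> sum_pairs m - through" for p
    using that peel_off_in_sum_triples[OF assms, of "fst p" "snd p"] by (auto simp: through_def)
  then have "peel_off (unit_vec t) ` (sum_pairs m - through) \<subseteq> sum_triples m"
    by blast
  moreover have "inj_on (peel_off (unit_vec t)) (sum_pairs m - through)"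
    using inj_on_peel_off[OF e_le] by (rule inj_on_subset) blast
  ultimately have "card (sum_pairs m - through) \<le> card (sum_triples m)"
    using card_inj_on_le finite_sum_triples by blast
  moreover have "card (sum_pairs m) \<le> card (sum_pairs m - through) + card through"
    using card_Un_le[of "sum_pairs m - through" through] by (simp add: Un_absorb2 through_def)
  moreover have "card through \<le> 1"
    unfolding through_def by (rule card_sum_pairs_through_le_1)
  ultimately show ?thesis
    by linarith
qed

end

theorem mainTheorem17:
  fixes n d :: nat and u :: "nat \<Rightarrow> nat \<Rightarrow> nat"
  assumes "d \<ge> 1"
    and "inj_on u {..<d}"
    and "u 0 = (\<lambda>_. 0)"
    and "\<And>k. k < d \<Longrightarrow> downward_closed n (u ` {..k})"
    and "1 \<le> m" and "m \<le> d - 1"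
  shows "W_T n u d m \<le> W_B u d m"
proof (cases "\<exists>i<n. u m = unit_vec i")
  case True
  then show ?thesis
    by (simp add: W_T_def W_B_def)
next
  case not_unit: False
  have "{..d - 1} = {..<d}"
    using \<open>d \<ge> 1\<close> by auto
  then interpret downset_enumeration n d u
    using assms(2,3) assms(4)[of "d - 1"] by unfold_locales (auto simp: zero_fun_def)
  have "m < d" "u m \<noteq> 0"
    using assms(1,5,6) u_eq_0_iff by auto
  then obtain t where "unit_vec t \<le> u m"
    using obtain_unit_vec_le u_in_vecs by blast
  then have "card (sum_pairs m) \<le> card (sum_triples m) + 1"
    using card_sum_pairs_le \<open>m < d\<close> by blast
  then show ?thesis
    using not_unit by (simp add: W_T_eq W_B_eq)
qed

end
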